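(* Let $q\geq 1$ be a constant, let $(X,d)$ be a finite metric space and $k$ an integer with $2\le k\le |X|$ (with $k$ even when considering remote-bipartition). For each diversity function $\mathrm{div}^q\in\{\mathrm{cl}^q,\mathrm{st}^q,\mathrm{bp}^q\}$ and each fixed optimal $k$-set $\mathrm{OPT}_{\mathrm{div}^q}\subseteq X$, there is a point $z_0\in \mathrm{OPT}_{\mathrm{div}^q}$ such that \[ X\setminus B\big(z_0, c_{\mathrm{div}^q}(\Delta_{\mathrm{div}^q})^{1/q}\big)\subseteq \mathrm{OPT}_{\mathrm{div}^q},\] where $c_{\mathrm{cl}^q}=2$, $c_{\mathrm{st}^q}=4$ and $c_{\mathrm{bp}^q}=6$.
   Context: For $T\subseteq X$ with $|T|=k$: $\mathrm{cl}^q(T)=\sum_{\{u,v\}\subseteq T} d^q(u,v)$; $\mathrm{st}^q(T)=\min_{z\in T}\sum_{u\in T\setminus\{z\}} d^q(z,u)$; $\mathrm{bp}^q(T)=\min_{L\subseteq T,|L|=|T|/2}\sum_{\ell\in L,r\in T\setminus L} d^q(\ell,r)$, where $d^q=d(\cdot,\cdot)^q$. An optimal $k$-set $\mathrm{OPT}_{\mathrm{div}^q}$ is a $k$-subset of $X$ maximizing $\mathrm{div}^q$. The average optimal values are $\Delta_{\mathrm{cl}^q}=\mathrm{cl}^q(\mathrm{OPT}_{\mathrm{cl}^q})/\binom{k}{2}$, $\Delta_{\mathrm{st}^q}=\mathrm{st}^q(\mathrm{OPT}_{\mathrm{st}^q})/(k-1)$, $\Delta_{\mathrm{bp}^q}=\mathrm{bp}^q(\mathrm{OPT}_{\mathrm{bp}^q})/(k^2/4)$.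 $B(u,r)=\{v\in X: d(u,v)\le r\}$. *)

theory Defs
  imports Complex_Main
begin

definition metric_on :: "'a set \<Rightarrow> ('a \<Rightarrow> 'a \<Rightarrow> real) \<Rightarrow> bool" where
  "metric_on X d \<longleftrightarrow>
     (\<forall>x\<in>X. \<forall>y\<in>X. d x y \<ge> 0) \<and>
     (\<forall>x\<in>X. \<forall>y\<in>X. d x y = 0 \<longleftrightarrow> x = y) \<and>
     (\<forall>x\<in>X. \<forall>y\<in>X. d x y = d y x) \<and>
     (\<forall>x\<in>X. \<forall>y\<in>X. \<forall>z\<in>X. d x z \<le> d x y + d y z)"

definition dq :: "real \<Rightarrow> ('a \<Rightarrow> 'a \<Rightarrow> real) \<Rightarrow> 'a \<Rightarrow> 'a \<Rightarrow> real" where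
  "dq q d u v = d u v powr q"

definition cl :: "real \<Rightarrow> ('a \<Rightarrow> 'a \<Rightarrow> real) \<Rightarrow> 'a set \<Rightarrow> real" where
  "cl q d T = (\<Sum>P\<in>{P. P \<subseteq> T \<and> card P = 2}. (THE r. \<exists>u v. P = {u, v} \<and> r = dq q d u v))"

definition st :: "real \<Rightarrow> ('a \<Rightarrow> 'a \<Rightarrow> real) \<Rightarrow> 'a set \<Rightarrow> real" where
  "st q d T = (MIN z\<in>T. \<Sum>u\<in>T - {z}. dq q d z u)"

definition bp :: "real \<Rightarrow> ('a \<Rightarrow> 'a \<Rightarrow> real) \<Rightarrow> 'a set \<Rightarrow> real" where
  "bp q d T = Min ((\<lambda>L. \<Sum>l\<in>L. \<Sum>r\<in>T - L. dq q d l r) ` {L. L \<subseteq> T \<and> 2 * card L = card T})"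

definition is_opt :: "('a set \<Rightarrow> real) \<Rightarrow> 'a set \<Rightarrow> nat \<Rightarrow> 'a set \<Rightarrow> bool" where
  "is_opt dv X k T \<longleftrightarrow> T \<subseteq> X \<and> card T = k \<and>
     (\<forall>S. S \<subseteq> X \<and> card S = k \<longrightarrow> dv S \<le> dv T)"

definition Ball_X :: "'a set \<Rightarrow> ('a \<Rightarrow> 'a \<Rightarrow> real) \<Rightarrow> 'a \<Rightarrow> real \<Rightarrow> 'a set" where
  "Ball_X X d u r = {v\<in>X. d u v \<le> r}"

(* average optimal values, expressed via a fixed optimal set T *)
definition Delta_cl :: "real \<Rightarrow> ('a \<Rightarrow> 'a \<Rightarrow> real) \<Rightarrow> nat \<Rightarrow> 'a set \<Rightarrow> real" where
  "Delta_cl q d k T = cl q d T / real (k choose 2)"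
definition Delta_st :: "real \<Rightarrow> ('a \<Rightarrow> 'a \<Rightarrow> real) \<Rightarrow> nat \<Rightarrow> 'a set \<Rightarrow> real" where
  "Delta_st q d k T = st q d T / (real k - 1)"
definition Delta_bp :: "real \<Rightarrow> ('a \<Rightarrow> 'a \<Rightarrow> real) \<Rightarrow> nat \<Rightarrow> 'a set \<Rightarrow> real" where
  "Delta_bp q d k T = bp q d T / (real k ^ 2 / 4)"

end

theory Submission
  imports Defs "HOL-Analysis.Convex"
begin

(* For q \<ge> 1 the power d^q satisfies the relaxed triangle inequality
   d^q(u,w) \<le> 2^(q-1) (d^q(u,v) + d^q(v,w)).  In each of the three cases one picks a centre z in
   the optimal set T whose d^q-distances to (a part of) T are on average at most a multiple of
   \<Delta>: a point of below-average star sum for remote-clique, the star centre for remote-star, a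
   point of small cut contribution on one side of an optimal bisection for remote-bipartition.
   If some x outside T were farther than c \<Delta>^(1/q) from z, summing the relaxed triangle
   inequality over the other points of T would show that x is farther from them than z is, so
   exchanging z for x would strictly increase the diversity, contradicting optimality. *)

lemma powr_eq_mult_powr_minus_one:
  fixes a q :: real
  shows "0 < a \<Longrightarrow> a powr q = a * a powr (q - 1)"
  using powr_add[of a 1 "q - 1"] by simp

lemma powr_add_le_two_powr:
  fixes a b q :: real
  assumes "0 \<le> a" "0 \<le> b" "1 \<le> q"
  shows "(a + b) powr q \<le> 2 powr (q - 1) * (a powr q + b powr q)"
proof -
  have one_le: "1 \<le> 2 powr (q - 1)"
    using assms(3) by (intro ge_one_powr_ge_zero) auto
  consider "a = 0" | "b = 0" | "0 < a" "0 < b"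
    using assms(1,2) by fastforce
  then show ?thesis
  proof cases
    case 1
    then show ?thesis using mult_right_mono[OF one_le, of "b powr q"] by simp
  next
    case 2
    then show ?thesis using mult_right_mono[OF one_le, of "a powr q"] by simp
  next
    case 3
    have "((1 - 1/2) *\<^sub>R a + (1/2) *\<^sub>R b) powr q \<le> (1 - 1/2) * a powr q + (1/2) * b powr q"
      using convex_onD[OF powr_convex[OF assms(3)], of "1/2" a b] 3 by simp
    then have "(a + b) powr q / 2 powr q \<le> (a powr q + b powr q) / 2"
      by (simp add: powr_divide field_simps)
    then show ?thesis by (simp add: powr_eq_mult_powr_minus_one[of 2 q] field_simps)
  qed
qed

lemma two_powr_mult_one_plus_two_powr_le_six_powr:
  fixes q :: real
  assumes "1 \<le> q"
  shows "2 powr q * (1 + 2 powr q) \<le> 6 powr q"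
proof -
  have "2 powr (q - 1) \<le> 3 powr (q - 1)" "1 \<le> 3 powr (q - 1)"
    using assms by (auto intro: powr_mono2 ge_one_powr_ge_zero)
  then have "1 + 2 powr q \<le> 3 powr q"
    using powr_eq_mult_powr_minus_one[of 2 q] powr_eq_mult_powr_minus_one[of 3 q] by simp
  then show ?thesis
    using powr_mult[of 2 3 q] by simp
qed

lemma mult_root_less_imp_powr_less:
  fixes c r D q :: real
  assumes "0 < c" "0 \<le> r" "0 < q" "c * r powr (1/q) < D"
  shows "c powr q * r < D powr q"
proof -
  have "(c * r powr (1/q)) powr q < D powr q"
    using assms by (intro powr_less_mono2) auto
  moreover have "(c * r powr (1/q)) powr q = c powr q * r"
    using assms by (simp add: powr_mult powr_powr)
  ultimately show ?thesis by simp
qed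

lemma exists_card_mult_le_sum:
  fixes f :: "'b \<Rightarrow> real"
  assumes "finite A" "A \<noteq> {}"
  obtains a where "a \<in> A" "real (card A) * f a \<le> sum f A"
proof -
  have "Min (f ` A) \<in> f ` A" using assms by simp
  then obtain a where a: "a \<in> A" "f a = Min (f ` A)" by (metis imageE)
  then have "\<forall>b\<in>A. f a \<le> f b" using assms by simp
  then show ?thesis using that[OF a(1)] sum_bounded_below[of A "f a" f] by auto
qed

lemma is_opt_swap_le:
  assumes "is_opt dv X k T" "finite T" "z \<in> T" "x \<in> X - T"
  shows "dv (insert x (T - {z})) \<le> dv T"
proof -
  have "card (insert x (T - {z})) = card T"
    using assms(2-4) card_Suc_Diff1[of T z] by simp
  moreover have "insert x (T - {z}) \<subseteq> X"
    using assms(1,4) unfolding is_opt_def by auto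
  ultimately show ?thesis using assms(1) unfolding is_opt_def by simp
qed

lemma is_opt_contains_far_points:
  assumes opt: "is_opt dv X k T" and "finite T" "z \<in> T"
    and swap_increases: "\<And>x. x \<in> X - T \<Longrightarrow> r < d z x \<Longrightarrow> dv T < dv (insert x (T - {z}))"
  shows "X - Ball_X X d z r \<subseteq> T"
proof
  fix x assume x: "x \<in> X - Ball_X X d z r"
  show "x \<in> T"
  proof (rule ccontr)
    assume "x \<notin> T"
    with x have "dv T < dv (insert x (T - {z}))" by (intro swap_increases) (auto simp: Ball_X_def)
    moreover have "dv (insert x (T - {z})) \<le> dv T"
      using x \<open>x \<notin> T\<close> by (intro is_opt_swap_le[OF opt assms(2,3)]) (auto simp: Ball_X_def)
    ultimately show False by simp
  qed
qed

section \<open>The relaxed triangle inequality for d^q\<close>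

lemma dq_nonneg: "0 \<le> dq q d u v"
  by (simp add: dq_def)

locale power_metric =
  fixes X :: "'a set" and d :: "'a \<Rightarrow> 'a \<Rightarrow> real" and q :: real
  assumes metric: "metric_on X d" and one_le_q: "1 \<le> q"
begin

lemma d_nonneg: "u \<in> X \<Longrightarrow> v \<in> X \<Longrightarrow> 0 \<le> d u v"
  using metric by (simp add: metric_on_def)

lemma d_sym: "u \<in> X \<Longrightarrow> v \<in> X \<Longrightarrow> d u v = d v u"
  using metric by (simp add: metric_on_def)

lemma d_triangle: "u \<in> X \<Longrightarrow> v \<in> X \<Longrightarrow> w \<in> X \<Longrightarrow> d u w \<le> d u v + d v w"
  using metric by (simp add: metric_on_def)

lemma dq_sym: "u \<in> X \<Longrightarrow> v \<in> X \<Longrightarrow> dq q d u v = dq q d v u"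
  by (simp add: dq_def d_sym)

lemma dq_triangle:
  assumes "u \<in> X" "v \<in> X" "w \<in> X"
  shows "dq q d u w \<le> 2 powr (q - 1) * (dq q d u v + dq q d v w)"
proof -
  have "d u w powr q \<le> (d u v + d v w) powr q"
    using assms d_nonneg d_triangle one_le_q by (intro powr_mono2) auto
  also have "\<dots> \<le> 2 powr (q - 1) * (d u v powr q + d v w powr q)"
    using assms d_nonneg one_le_q by (intro powr_add_le_two_powr) auto
  finally show ?thesis by (simp add: dq_def)
qed

lemma card_mult_dq_le_sum:
  assumes "S \<subseteq> X" "z \<in> X" "x \<in> X"
  shows "card S * dq q d z x \<le> 2 powr (q - 1) * ((\<Sum>u\<in>S. dq q d z u) + (\<Sum>u\<in>S. dq q d x u))"
proof -
  have "(\<Sum>u\<in>S. dq q d z x) \<le> (\<Sum>u\<in>S. 2 powr (q - 1) * (dq q d z u + dq q d x u))"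
    using assms dq_triangle dq_sym by (intro sum_mono) (metis subsetD)
  then show ?thesis by (simp add: sum.distrib sum_distrib_left distrib_left)
qed

lemma sum_dq_less_sum_dq_far:
  fixes B :: real
  assumes "S \<subseteq> X" "finite S" "S \<noteq> {}" "z \<in> X" "x \<in> X"
    and near: "(\<Sum>u\<in>S. dq q d z u) \<le> card S * B"
    and far: "2 powr q * B < dq q d z x"
  shows "(\<Sum>u\<in>S. dq q d z u) < (\<Sum>u\<in>S. dq q d x u)"
proof (rule ccontr)
  assume "\<not> ?thesis"
  with near have "(\<Sum>u\<in>S. dq q d z u) + (\<Sum>u\<in>S. dq q d x u) \<le> 2 * (card S * B)"
    by linarith
  then have "card S * dq q d z x \<le> 2 powr (q - 1) * (2 * (card S * B))"
    using card_mult_dq_le_sum[OF assms(1,4,5)] by (smt (verit) mult_left_mono powr_ge_zero)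
  also have "\<dots> = card S * (2 powr q * B)"
    by (simp add: powr_eq_mult_powr_minus_one[of 2 q])
  finally show False
    using far assms(2,3) by (simp add: card_gt_0_iff)
qed

end

section \<open>Remote-clique and remote-star\<close>

lemma card2_subsets_insert:
  assumes "x \<notin> S"
  shows "{P. P \<subseteq> insert x S \<and> card P = 2} = {P. P \<subseteq> S \<and> card P = 2} \<union> (\<lambda>u. {x, u}) ` S"
proof (intro equalityI subsetI)
  fix P assume "P \<in> {P. P \<subseteq> insert x S \<and> card P = 2}"
  then obtain a b where P: "P = {a, b}" "a \<noteq> b" "P \<subseteq> insert x S" by (auto simp: card_2_iff)
  then show "P \<in> {P. P \<subseteq> S \<and> card P = 2} \<union> (\<lambda>u. {x, u}) ` S"
    using assms by (cases "x \<in> P") (auto simp: card_2_iff insert_commute)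
next
  fix P assume "P \<in> {P. P \<subseteq> S \<and> card P = 2} \<union> (\<lambda>u. {x, u}) ` S"
  then show "P \<in> {P. P \<subseteq> insert x S \<and> card P = 2}" using assms by (auto simp: card_2_iff)
qed

definition star_sum :: "real \<Rightarrow> ('a \<Rightarrow> 'a \<Rightarrow> real) \<Rightarrow> 'a set \<Rightarrow> 'a \<Rightarrow> real" where
  "star_sum q d T z = (\<Sum>u\<in>T - {z}. dq q d z u)"

lemma star_sum_le_imp_nonneg:
  fixes \<Delta> :: real
  assumes "2 \<le> card T" "star_sum q d T z \<le> (card T - 1) * \<Delta>"
  shows "0 \<le> \<Delta>"
proof -
  have "0 \<le> star_sum q d T z"
    unfolding star_sum_def by (intro sum_nonneg dq_nonneg)
  then have "0 \<le> (card T - 1) * \<Delta>" using assms(2) by linarith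
  then show ?thesis using assms(1) by (simp add: zero_le_mult_iff)
qed

context power_metric
begin

lemma the_dq_doubleton:
  assumes "x \<in> X" "u \<in> X"
  shows "(THE r. \<exists>a b. {x, u} = {a, b} \<and> r = dq q d a b) = dq q d x u"
proof (rule the_equality)
  fix r assume "\<exists>a b. {x, u} = {a, b} \<and> r = dq q d a b"
  then show "r = dq q d x u" using assms dq_sym by (auto simp: doubleton_eq_iff)
qed blast

lemma cl_insert:
  assumes "finite S" "x \<notin> S" "insert x S \<subseteq> X"
  shows "cl q d (insert x S) = cl q d S + (\<Sum>u\<in>S. dq q d x u)"
proof -
  let ?g = "\<lambda>P. THE r. \<exists>u v. P = {u, v} \<and> r = dq q d u v"
  have "cl q d (insert x S) = cl q d S + sum ?g ((\<lambda>u. {x, u}) ` S)"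
    unfolding cl_def card2_subsets_insert[OF assms(2)] using assms(1,2)
    by (intro sum.union_disjoint) auto
  also have "sum ?g ((\<lambda>u. {x, u}) ` S) = (\<Sum>u\<in>S. ?g {x, u})"
    using assms(2) by (intro sum.reindex_cong[of _ _ _ ?g]) (auto simp: inj_on_def doubleton_eq_iff)
  also have "\<dots> = (\<Sum>u\<in>S. dq q d x u)"
    using assms(3) by (intro sum.cong refl the_dq_doubleton) auto
  finally show ?thesis .
qed

lemma sum_star_sum_eq_two_cl:
  assumes "finite T" "T \<subseteq> X"
  shows "(\<Sum>z\<in>T. star_sum q d T z) = 2 * cl q d T"
  using assms
proof (induction T rule: finite_induct)
  case empty
  then show ?case by (simp add: cl_def)
next
  case (insert x F)
  have "(\<Sum>z\<in>insert x F. star_sum q d (insert x F) z)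
      = (\<Sum>u\<in>F. dq q d x u) + (\<Sum>z\<in>F. dq q d z x + star_sum q d F z)"
    using insert.hyps unfolding star_sum_def
    by (auto simp: insert_Diff_if intro!: sum.cong)
  also have "\<dots> = 2 * (\<Sum>u\<in>F. dq q d x u) + (\<Sum>z\<in>F. star_sum q d F z)"
    using insert.prems dq_sym by (simp add: sum.distrib subset_iff)
  finally show ?case
    using insert cl_insert[OF insert.hyps] by simp
qed

lemma cl_swap_increases:
  fixes \<Delta> :: real
  assumes "finite T" "T \<subseteq> X" "2 \<le> card T" "z \<in> T" "x \<in> X - T"
    and near: "star_sum q d T z \<le> (card T - 1) * \<Delta>"
    and far: "2 powr q * \<Delta> < dq q d z x"
  shows "cl q d T < cl q d (insert x (T - {z}))"
proof -
  let ?S = "T - {z}"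
  have S: "finite ?S" "card ?S = card T - 1"
    using assms(1,4) by auto
  then have "?S \<noteq> {}" using assms(3) by (intro notI) simp
  have "(\<Sum>u\<in>?S. dq q d z u) \<le> card ?S * \<Delta>"
    using near S(2) assms(3) by (simp add: star_sum_def of_nat_diff)
  then have "star_sum q d T z < (\<Sum>u\<in>?S. dq q d x u)"
    unfolding star_sum_def using assms(2,4,5) S(1) \<open>?S \<noteq> {}\<close> far
    by (intro sum_dq_less_sum_dq_far) auto
  moreover have "cl q d T = cl q d ?S + star_sum q d T z"
    using cl_insert[of ?S z] assms(1,2,4) by (simp add: insert_absorb star_sum_def)
  moreover have "cl q d (insert x ?S) = cl q d ?S + (\<Sum>u\<in>?S. dq q d x u)"
    using cl_insert[of ?S x] assms(1,2,5) by auto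
  ultimately show ?thesis by simp
qed

lemma cl_opt_contains_far_points:
  assumes "finite X" "2 \<le> k" and opt: "is_opt (cl q d) X k T"
  shows "\<exists>z\<in>T. X - Ball_X X d z (2 * Delta_cl q d k T powr (1/q)) \<subseteq> T"
proof -
  have T: "T \<subseteq> X" "card T = k" "finite T"
    using opt assms(1) by (auto simp: is_opt_def intro: finite_subset)
  moreover have "T \<noteq> {}" using T(2) assms(2) by auto
  ultimately obtain z where "z \<in> T" "card T * star_sum q d T z \<le> (\<Sum>u\<in>T. star_sum q d T u)"
    using exists_card_mult_le_sum by blast
  then have z: "z \<in> T" "k * star_sum q d T z \<le> 2 * cl q d T"
    using sum_star_sum_eq_two_cl T by simp_all
  define \<Delta> where "\<Delta> = Delta_cl q d k T"
  have "k * ((k - 1) * \<Delta>) = 2 * real (k choose 2) * \<Delta>"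
    using assms(2) by (simp add: choose_two real_of_nat_div of_nat_diff)
  also have "\<dots> = 2 * cl q d T"
    using assms(2) by (simp add: \<Delta>_def Delta_cl_def zero_less_binomial_iff)
  finally have cl_eq: "2 * cl q d T = k * ((k - 1) * \<Delta>)" ..
  with z(2) assms(2) have near: "star_sum q d T z \<le> (k - 1) * \<Delta>"
    by simp
  then have "0 \<le> \<Delta>"
    using star_sum_le_imp_nonneg[of T q d z \<Delta>] T(2) assms(2) by (simp add: of_nat_diff)
  have "X - Ball_X X d z (2 * \<Delta> powr (1/q)) \<subseteq> T"
  proof (rule is_opt_contains_far_points[OF opt T(3) z(1)])
    fix x assume "x \<in> X - T" "2 * \<Delta> powr (1/q) < d z x"
    then have "2 powr q * \<Delta> < dq q d z x"
      using mult_root_less_imp_powr_less \<open>0 \<le> \<Delta>\<close> one_le_q by (simp add: dq_def)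
    then show "cl q d T < cl q d (insert x (T - {z}))"
      using cl_swap_increases T z(1) \<open>x \<in> X - T\<close> near assms(2) by simp
  qed
  then show ?thesis using z(1) unfolding \<Delta>_def by blast
qed

lemma star_sum_less_far_neighbour:
  fixes \<Delta> :: real
  assumes T: "finite T" "T \<subseteq> X" and "z0 \<in> T" "z \<in> T" "z \<noteq> z0"
    and near: "star_sum q d T z0 \<le> (card T - 1) * \<Delta>"
    and far: "2 powr q * \<Delta> < dq q d z0 z"
  shows "star_sum q d T z0 < (\<Sum>u\<in>T - {z0, z}. dq q d z u)"
proof (rule ccontr)
  assume "\<not> ?thesis"
  define R where "R = T - {z0, z}"
  define E where "E = dq q d z0 z"
  define H where "H = 2 powr (q - 1)"
  have H: "1 \<le> H" "2 powr q = 2 * H"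
    using one_le_q powr_eq_mult_powr_minus_one[of 2 q] by (auto simp: H_def ge_one_powr_ge_zero)
  have "card {z0, z} \<le> card T"
    using assms(3,4) T(1) by (intro card_mono) auto
  then have card_T: "2 \<le> card T" using assms(5) by simp
  then have "0 \<le> \<Delta>" using star_sum_le_imp_nonneg[OF _ near] by simp
  have card_R: "card R = card T - 2"
    using assms(3-5) T(1) by (simp add: R_def card_Diff_subset)
  have "T - {z0} = insert z R" "z \<notin> R" "finite R"
    using assms(1,3-5) by (auto simp: R_def)
  then have "star_sum q d T z0 = E + (\<Sum>u\<in>R. dq q d z0 u)"
    by (simp add: star_sum_def E_def)
  with \<open>\<not> ?thesis\<close> near
  have "(\<Sum>u\<in>R. dq q d z0 u) + (\<Sum>u\<in>R. dq q d z u) \<le> 2 * ((card T - 1) * \<Delta>) - E"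
    unfolding R_def by linarith
  moreover have "card R * E \<le> H * ((\<Sum>u\<in>R. dq q d z0 u) + (\<Sum>u\<in>R. dq q d z u))"
    unfolding E_def H_def using T(2) assms(3,4) by (intro card_mult_dq_le_sum) (auto simp: R_def)
  ultimately have "(card T - 2) * E \<le> H * (2 * ((card T - 1) * \<Delta>) - E)"
    using card_R card_T H(1) by (smt (verit, best) mult_left_mono of_nat_diff of_nat_numeral)
  then have "(card T - 2 + H) * E \<le> (card T - 1) * (2 powr q * \<Delta>)"
    using H(2) by (simp add: algebra_simps)
  moreover have "(card T - 1) * (2 powr q * \<Delta>) \<le> (card T - 2 + H) * (2 powr q * \<Delta>)"
    using H(1) \<open>0 \<le> \<Delta>\<close> by (intro mult_right_mono) auto
  moreover have "(card T - 2 + H) * (2 powr q * \<Delta>) < (card T - 2 + H) * E"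
    using far H(1) card_T by (intro mult_strict_left_mono) (auto simp: E_def)
  ultimately show False by linarith
qed

lemma star_sum_swap_gt:
  fixes \<Delta> :: real
  assumes T: "finite T" "T \<subseteq> X" and "z0 \<in> T" "z \<in> T" "z \<noteq> z0" "x \<in> X - T"
    and min: "star_sum q d T z0 \<le> star_sum q d T z"
    and near: "star_sum q d T z0 \<le> (card T - 1) * \<Delta>"
    and far: "4 powr q * \<Delta> < dq q d z0 x"
  shows "star_sum q d T z0 < star_sum q d (insert x (T - {z0})) z"
proof -
  define R where "R = T - {z0, z}"
  have in_X: "z0 \<in> X" "z \<in> X" "x \<in> X"
    using assms by auto
  have "insert x (T - {z0}) - {z} = insert x R" "T - {z} = insert z0 R"
    "finite R" "x \<notin> R" "z0 \<notin> R"
    using assms by (auto simp: R_def)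
  then have swapped: "star_sum q d (insert x (T - {z0})) z = dq q d z x + (\<Sum>u\<in>R. dq q d z u)"
    and at_z: "star_sum q d T z = dq q d z z0 + (\<Sum>u\<in>R. dq q d z u)"
    by (simp_all add: star_sum_def)
  \<comment> \<open>Either the swap lengthens the star of z itself, or z0 is so far from z that the
    distances from z to the remaining points alone exceed the star sum of z0.\<close>
  show ?thesis
  proof (cases "d z z0 < d z x")
    case True
    then have "dq q d z z0 < dq q d z x"
      using in_X d_nonneg one_le_q by (simp add: dq_def powr_less_mono2)
    then show ?thesis using min swapped at_z by simp
  next
    case False
    then have "d z0 x \<le> 2 * d z0 z"
      using d_triangle[of z0 z x] d_sym in_X by simp
    then have "dq q d z0 x \<le> 2 powr q * dq q d z0 z"
      using in_X d_nonneg one_le_q by (simp add: dq_def powr_mult[symmetric] powr_mono2)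
    moreover have "4 powr q = 2 powr q * 2 powr q"
      using powr_mult[of 2 2 q] by simp
    ultimately have "2 powr q * (2 powr q * \<Delta>) < 2 powr q * dq q d z0 z"
      using far by (metis mult.assoc less_le_trans)
    then have "star_sum q d T z0 < (\<Sum>u\<in>R. dq q d z u)"
      unfolding R_def using star_sum_less_far_neighbour[OF T assms(3-5) near] by simp
    then show ?thesis using swapped dq_nonneg[of q d z x] by simp
  qed
qed

lemma st_swap_increases:
  fixes \<Delta> :: real
  assumes T: "finite T" "T \<subseteq> X" "2 \<le> card T" and "z0 \<in> T" "x \<in> X - T"
    and min: "\<And>z. z \<in> T \<Longrightarrow> star_sum q d T z0 \<le> star_sum q d T z"
    and near: "star_sum q d T z0 \<le> (card T - 1) * \<Delta>"
    and far: "4 powr q * \<Delta> < dq q d z0 x"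
  shows "st q d T < st q d (insert x (T - {z0}))"
proof -
  let ?S = "T - {z0}"
  have st_T: "st q d T = star_sum q d T z0"
    unfolding st_def star_sum_def[symmetric] using T(1) assms(4) min
    by (intro Min_eqI) auto
  have S: "finite ?S" "card ?S = card T - 1" "?S \<subseteq> X"
    using T assms(4) by auto
  then have "?S \<noteq> {}" using T(3) by (intro notI) simp
  have "0 \<le> \<Delta>" using star_sum_le_imp_nonneg T(3) near .
  then have "2 powr q * \<Delta> \<le> 4 powr q * \<Delta>"
    using one_le_q by (intro mult_right_mono powr_mono2) auto
  have at_x: "star_sum q d T z0 < star_sum q d (insert x ?S) x"
  proof -
    have "(\<Sum>u\<in>?S. dq q d z0 u) \<le> card ?S * \<Delta>"
      using near S(2) T(3) by (simp add: star_sum_def of_nat_diff)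
    then have "star_sum q d T z0 < (\<Sum>u\<in>?S. dq q d x u)"
      unfolding star_sum_def using S(1,3) \<open>?S \<noteq> {}\<close> assms(4,5) T(2) far
        \<open>2 powr q * \<Delta> \<le> 4 powr q * \<Delta>\<close>
      by (intro sum_dq_less_sum_dq_far) auto
    moreover have "insert x ?S - {x} = ?S" using assms(5) by auto
    ultimately show ?thesis by (simp add: star_sum_def)
  qed
  have "star_sum q d T z0 < star_sum q d (insert x ?S) z" if "z \<in> insert x ?S" for z
    using that at_x star_sum_swap_gt[OF T(1,2) assms(4) _ _ assms(5) min near far] by auto
  then have "star_sum q d T z0 < st q d (insert x ?S)"
    unfolding st_def star_sum_def[symmetric] using S(1) by (subst Min_gr_iff) auto
  then show ?thesis using st_T by simp
qed

lemma st_opt_contains_far_points: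
  assumes "finite X" "2 \<le> k" and opt: "is_opt (st q d) X k T"
  shows "\<exists>z\<in>T. X - Ball_X X d z (4 * Delta_st q d k T powr (1/q)) \<subseteq> T"
proof -
  have T: "T \<subseteq> X" "card T = k" "finite T"
    using opt assms(1) by (auto simp: is_opt_def intro: finite_subset)
  moreover have "T \<noteq> {}" using T(2) assms(2) by auto
  ultimately have "st q d T \<in> star_sum q d T ` T"
    unfolding st_def star_sum_def[symmetric] by simp
  then obtain z where z: "z \<in> T" "star_sum q d T z = st q d T" by (metis imageE)
  then have min: "star_sum q d T z \<le> star_sum q d T u" if "u \<in> T" for u
    using that T(3) unfolding st_def star_sum_def[symmetric] by simp
  define \<Delta> where "\<Delta> = Delta_st q d k T"
  have near: "star_sum q d T z = (k - 1) * \<Delta>"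
    using z(2) assms(2) by (simp add: \<Delta>_def Delta_st_def)
  then have "0 \<le> \<Delta>"
    using star_sum_le_imp_nonneg[of T q d z \<Delta>] T(2) assms(2) by (simp add: of_nat_diff)
  have "X - Ball_X X d z (4 * \<Delta> powr (1/q)) \<subseteq> T"
  proof (rule is_opt_contains_far_points[OF opt T(3) z(1)])
    fix x assume "x \<in> X - T" "4 * \<Delta> powr (1/q) < d z x"
    then have "4 powr q * \<Delta> < dq q d z x"
      using mult_root_less_imp_powr_less \<open>0 \<le> \<Delta>\<close> one_le_q by (simp add: dq_def)
    then show "st q d T < st q d (insert x (T - {z}))"
      using st_swap_increases[OF T(3,1) _ z(1) \<open>x \<in> X - T\<close> min, of \<Delta>] near T(2) assms(2)
      by simp
  qed
  then show ?thesis using z(1) unfolding \<Delta>_def by blast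
qed

end

section \<open>Remote-bipartition\<close>

definition bisections :: "'a set \<Rightarrow> 'a set set" where
  "bisections T = {L. L \<subseteq> T \<and> 2 * card L = card T}"

definition cut_cost :: "real \<Rightarrow> ('a \<Rightarrow> 'a \<Rightarrow> real) \<Rightarrow> 'a set \<Rightarrow> 'a set \<Rightarrow> real" where
  "cut_cost q d T L = (\<Sum>l\<in>L. \<Sum>r\<in>T - L. dq q d l r)"

lemma bp_eq_Min_cut_cost: "bp q d T = Min (cut_cost q d T ` bisections T)"
  by (simp add: bp_def cut_cost_def bisections_def)

lemma finite_bisections: "finite T \<Longrightarrow> finite (bisections T)"
  by (rule finite_subset[of _ "Pow T"]) (auto simp: bisections_def)

lemma bisections_nonempty:
  assumes "finite T" "even (card T)"
  shows "bisections T \<noteq> {}"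
proof -
  obtain L where "L \<subseteq> T" "card L = card T div 2"
    using obtain_subset_with_card_n[of "card T div 2" T] by auto
  then show ?thesis using assms(2) by (auto simp: bisections_def)
qed

lemma bp_attained:
  assumes "finite T" "even (card T)"
  obtains L where "L \<in> bisections T" "cut_cost q d T L = bp q d T"
proof -
  have "bp q d T \<in> cut_cost q d T ` bisections T"
    unfolding bp_eq_Min_cut_cost
    using assms finite_bisections bisections_nonempty by (intro Min_in) auto
  then show ?thesis using that by (metis imageE)
qed

context power_metric
begin

lemma bisection_center_bound:
  assumes T: "finite T" "T \<subseteq> X" and L: "L \<subseteq> T" "card L = m" "card (T - L) = m" and "0 < m"
  obtains l0 where "l0 \<in> L" "(\<Sum>u\<in>T. dq q d l0 u) \<le> (1 + 2 powr q) * cut_cost q d T L / m"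
proof -
  let ?R = "T - L"
  define A where "A l = (\<Sum>r\<in>?R. dq q d l r)" for l
  have cut: "cut_cost q d T L = sum A L"
    by (simp add: cut_cost_def A_def)
  have "finite L" "L \<noteq> {}" using L T(1) \<open>0 < m\<close> finite_subset by auto
  then obtain l0 where l0: "l0 \<in> L" "m * A l0 \<le> sum A L"
    using exists_card_mult_le_sum L(2) by metis
  have l0X: "l0 \<in> X" using l0(1) L(1) T(2) by auto
  define H where "H = 2 powr (q - 1)"
  have H: "1 \<le> H" "2 powr q = 2 * H"
    using one_le_q powr_eq_mult_powr_minus_one[of 2 q] by (auto simp: H_def ge_one_powr_ge_zero)
  have "m * (\<Sum>l\<in>L. dq q d l0 l) = (\<Sum>l\<in>L. card ?R * dq q d l0 l)"
    using L(3) by (simp add: sum_distrib_left)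
  also have "\<dots> \<le> (\<Sum>l\<in>L. H * (A l0 + A l))"
    unfolding A_def H_def using L(1) T(2) l0X
    by (intro sum_mono card_mult_dq_le_sum) auto
  also have "\<dots> = H * (m * A l0 + sum A L)"
    using L(2) by (simp add: sum.distrib sum_distrib_left distrib_left)
  also have "\<dots> \<le> 2 powr q * cut_cost q d T L"
    using l0(2) H cut by (simp add: mult_left_mono)
  finally have near_L: "m * (\<Sum>l\<in>L. dq q d l0 l) \<le> 2 powr q * cut_cost q d T L" .
  have "(\<Sum>u\<in>T. dq q d l0 u) = (\<Sum>l\<in>L. dq q d l0 l) + A l0"
    unfolding A_def using T(1) L(1) by (metis add.commute sum.subset_diff)
  then have "m * (\<Sum>u\<in>T. dq q d l0 u) \<le> (1 + 2 powr q) * cut_cost q d T L"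
    using near_L l0(2) cut by (simp add: algebra_simps)
  then show ?thesis
    using that[OF l0(1)] \<open>0 < m\<close> by (simp add: field_simps)
qed

lemma cut_cost_complement:
  assumes "L \<subseteq> T" "T \<subseteq> X"
  shows "cut_cost q d T (T - L) = cut_cost q d T L"
proof -
  have "cut_cost q d T (T - L) = (\<Sum>l\<in>T - L. \<Sum>r\<in>L. dq q d l r)"
    using assms(1) by (simp add: cut_cost_def double_diff)
  also have "\<dots> = (\<Sum>r\<in>L. \<Sum>l\<in>T - L. dq q d r l)"
    using assms by (subst sum.swap) (intro sum.cong refl dq_sym; auto)
  finally show ?thesis by (simp add: cut_cost_def)
qed

lemma bisection_swap_cheaper:
  assumes T: "finite T" "T \<subseteq> X" and "l0 \<in> T" "x \<in> X - T"
    and gain: "\<And>S. S \<subseteq> T - {l0} \<Longrightarrow> 2 * card S = card T \<Longrightarrow>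
      (\<Sum>u\<in>S. dq q d l0 u) < (\<Sum>u\<in>S. dq q d x u)"
    and L': "L' \<in> bisections (insert x (T - {l0}))" "x \<in> L'"
  shows "insert l0 (L' - {x}) \<in> bisections T"
    and "cut_cost q d T (insert l0 (L' - {x})) < cut_cost q d (insert x (T - {l0})) L'"
proof -
  let ?T' = "insert x (T - {l0})" and ?L = "insert l0 (L' - {x})"
  define R where "R = ?T' - L'"
  have "card ?T' = card T"
    using T(1) assms(3,4) card_Suc_Diff1[of T l0] by simp
  then have L'_sub: "L' \<subseteq> ?T'" and card_L': "2 * card L' = card T"
    using L'(1) by (auto simp: bisections_def)
  have fin_L': "finite L'" using L'_sub T(1) finite_subset by auto
  have "l0 \<notin> L' - {x}" using L'_sub by auto
  then have "card ?L = card L'"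
    using L'(2) fin_L' card_Suc_Diff1[of L' x] by simp
  then show "?L \<in> bisections T"
    using L'_sub card_L' assms(3) by (auto simp: bisections_def)
  have "T - ?L = R" "R \<subseteq> T - {l0}"
    using L'(2) assms(4) by (auto simp: R_def)
  have "card R = card L'"
    using L'_sub card_L' \<open>card ?T' = card T\<close> fin_L' T(1) by (simp add: R_def card_Diff_subset)
  have "cut_cost q d ?T' L' = (\<Sum>r\<in>R. dq q d x r) + (\<Sum>l\<in>L' - {x}. \<Sum>r\<in>R. dq q d l r)"
    unfolding cut_cost_def R_def[symmetric] using fin_L' L'(2) by (rule sum.remove)
  moreover have "cut_cost q d T ?L = (\<Sum>r\<in>R. dq q d l0 r) + (\<Sum>l\<in>L' - {x}. \<Sum>r\<in>R. dq q d l r)"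
    unfolding cut_cost_def \<open>T - ?L = R\<close> using fin_L' \<open>l0 \<notin> L' - {x}\<close> by simp
  moreover have "(\<Sum>r\<in>R. dq q d l0 r) < (\<Sum>r\<in>R. dq q d x r)"
    using gain \<open>R \<subseteq> T - {l0}\<close> \<open>card R = card L'\<close> card_L' by simp
  ultimately show "cut_cost q d T ?L < cut_cost q d ?T' L'" by simp
qed

lemma bp_swap_increases:
  assumes T: "finite T" "T \<subseteq> X" "even (card T)" and "l0 \<in> T" "x \<in> X - T"
    and gain: "\<And>S. S \<subseteq> T - {l0} \<Longrightarrow> 2 * card S = card T \<Longrightarrow>
      (\<Sum>u\<in>S. dq q d l0 u) < (\<Sum>u\<in>S. dq q d x u)"
  shows "bp q d T < bp q d (insert x (T - {l0}))"
proof -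
  let ?T' = "insert x (T - {l0})"
  have T': "finite ?T'" "card ?T' = card T" "?T' \<subseteq> X"
    using T(1,2) assms(4,5) card_Suc_Diff1[of T l0] by auto
  have cheaper: "bp q d T < cut_cost q d ?T' L'" if "L' \<in> bisections ?T'" "x \<in> L'" for L'
  proof -
    let ?L = "insert l0 (L' - {x})"
    have "?L \<in> bisections T" "cut_cost q d T ?L < cut_cost q d ?T' L'"
      using bisection_swap_cheaper[OF T(1,2) assms(4,5) gain that] by blast+
    then show ?thesis
      using finite_bisections[OF T(1)] unfolding bp_eq_Min_cut_cost
      by (meson Min_le finite_imageI image_eqI le_less_trans)
  qed
  have "bp q d T < cut_cost q d ?T' L'" if L': "L' \<in> bisections ?T'" for L'
  proof (cases "x \<in> L'")
    case False
    have "?T' - L' \<in> bisections ?T'"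
      using L' T'(1) by (auto simp: bisections_def card_Diff_subset finite_subset)
    then have "bp q d T < cut_cost q d ?T' (?T' - L')"
      using False by (intro cheaper) auto
    then show ?thesis
      using L' T'(3) cut_cost_complement[of L' ?T'] by (simp add: bisections_def)
  qed (use cheaper L' in blast)
  then show ?thesis
    unfolding bp_eq_Min_cut_cost[of q d ?T']
    using finite_bisections[OF T'(1)] bisections_nonempty[OF T'(1)] T(3) T'(2)
    by (subst Min_gr_iff) auto
qed

lemma bp_opt_contains_far_points:
  assumes "finite X" "2 \<le> k" "even k" and opt: "is_opt (bp q d) X k T"
  shows "\<exists>z\<in>T. X - Ball_X X d z (6 * Delta_bp q d k T powr (1/q)) \<subseteq> T"
proof -
  have T: "T \<subseteq> X" "card T = k" "finite T"
    using opt assms(1) by (auto simp: is_opt_def intro: finite_subset)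
  obtain L where L: "L \<in> bisections T" "cut_cost q d T L = bp q d T"
    using bp_attained T(2,3) assms(3) by metis
  define m where "m = k div 2"
  have m: "k = 2 * m" "0 < m" using assms(2,3) by (auto simp: m_def)
  have "card L = m" "card (T - L) = m" "L \<subseteq> T"
    using L(1) T(2,3) m(1) by (auto simp: bisections_def card_Diff_subset finite_subset)
  then obtain z where z: "z \<in> L" "(\<Sum>u\<in>T. dq q d z u) \<le> (1 + 2 powr q) * bp q d T / m"
    using bisection_center_bound[OF T(3,1)] m(2) L(2) by metis
  define \<Delta> where "\<Delta> = Delta_bp q d k T"
  have bp_eq: "bp q d T = m^2 * \<Delta>"
    using m by (simp add: \<Delta>_def Delta_bp_def power2_eq_square)
  have "0 \<le> cut_cost q d T L"
    unfolding cut_cost_def by (intro sum_nonneg dq_nonneg)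
  then have "0 \<le> \<Delta>" using L(2) bp_eq m(2) by (simp add: zero_le_mult_iff)
  have near: "(\<Sum>u\<in>T. dq q d z u) \<le> m * ((1 + 2 powr q) * \<Delta>)"
    using z(2) m(2) bp_eq by (simp add: power2_eq_square mult_ac)
  have "z \<in> T" using z(1) \<open>L \<subseteq> T\<close> by auto
  have "X - Ball_X X d z (6 * \<Delta> powr (1/q)) \<subseteq> T"
  proof (rule is_opt_contains_far_points[OF opt T(3) \<open>z \<in> T\<close>])
    fix x assume x: "x \<in> X - T" "6 * \<Delta> powr (1/q) < d z x"
    have "2 powr q * ((1 + 2 powr q) * \<Delta>) \<le> 6 powr q * \<Delta>"
      using two_powr_mult_one_plus_two_powr_le_six_powr[OF one_le_q] \<open>0 \<le> \<Delta>\<close>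
      by (simp add: mult_right_mono mult.assoc[symmetric])
    also have "\<dots> < dq q d z x"
      using mult_root_less_imp_powr_less x(2) \<open>0 \<le> \<Delta>\<close> one_le_q by (simp add: dq_def)
    finally have far: "2 powr q * ((1 + 2 powr q) * \<Delta>) < dq q d z x" .
    have gain: "(\<Sum>u\<in>S. dq q d z u) < (\<Sum>u\<in>S. dq q d x u)"
      if S: "S \<subseteq> T - {z}" "2 * card S = card T" for S
    proof (rule sum_dq_less_sum_dq_far)
      have "(\<Sum>u\<in>S. dq q d z u) \<le> (\<Sum>u\<in>T. dq q d z u)"
        using S(1) T(3) by (intro sum_mono2) (auto simp: dq_nonneg)
      then show "(\<Sum>u\<in>S. dq q d z u) \<le> card S * ((1 + 2 powr q) * \<Delta>)"
        using near S(2) T(2) m(1) by simp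
    qed (use S T \<open>z \<in> T\<close> x far m in \<open>auto intro: rev_finite_subset[of T S]\<close>)
    show "bp q d T < bp q d (insert x (T - {z}))"
      using bp_swap_increases[OF T(3,1) _ \<open>z \<in> T\<close> x(1) gain] T(2) assms(3) by blast
  qed
  then show ?thesis using \<open>z \<in> T\<close> unfolding \<Delta>_def by blast
qed

end

theorem theorem7:
  fixes q :: real and X :: "'a set" and d :: "'a \<Rightarrow> 'a \<Rightarrow> real" and k :: nat
  assumes "q \<ge> 1" and "finite X" and "metric_on X d"
    and "2 \<le> k" and "k \<le> card X"
  shows "(\<forall>T. is_opt (cl q d) X k T \<longrightarrow>
            (\<exists>z0\<in>T. X - Ball_X X d z0 (2 * Delta_cl q d k T powr (1/q)) \<subseteq> T))
       \<and> (\<forall>T. is_opt (st q d) X k T \<longrightarrow>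
            (\<exists>z0\<in>T. X - Ball_X X d z0 (4 * Delta_st q d k T powr (1/q)) \<subseteq> T))
       \<and> (even k \<longrightarrow> (\<forall>T. is_opt (bp q d) X k T \<longrightarrow>
            (\<exists>z0\<in>T. X - Ball_X X d z0 (6 * Delta_bp q d k T powr (1/q)) \<subseteq> T)))"
proof -
  interpret power_metric X d q
    using assms(1,3) by unfold_locales
  show ?thesis
    using cl_opt_contains_far_points st_opt_contains_far_points bp_opt_contains_far_points
      assms(2,4) by blast
qed

end
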